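(* Let $d\geq 1$ and let $\mu$ be a probability distribution on $Q_d$ such that $w_i^0>\frac12$ for every $i\in[d]$. If $(A,B)$ with $A,B\in Q_d$ is an equilibrium, then $A=B=\mathbf 0$. Consequently an equilibrium exists if and only if $(\mathbf 0,\mathbf 0)$ is an equilibrium, i.e. if and only if $P_1(X,\mathbf 0)\le \frac12$ for all $X\in Q_d$.
   Context: $Q_d=\{0,1\}^d$ with the Hamming distance $d(X,Y)=|\{i: x_i\neq y_i\}|$. A probability distribution on $Q_d$ is a function $\mu:Q_d\to\mathbb R_{\ge0}$ with $\sum_{V\in Q_d}\mu(V)=1$, extended to subsets by $\mu(\mathcal A)=\sum_{V\in\mathcal A}\mu(V)$. For $A,B\in Q_d$ let $V(A,B)=\{X\in Q_d: d(X,A)<d(X,B)\}$ and $T(A,B)=\{X\in Q_d: d(X,A)=d(X,B)\}$. The payoffs in position $(A,B)$ (Player 1 at $A$, Player 2 at $B$) are $P_1(A,B)=\mu(V(A,B))+\frac12\mu(T(A,B))$ and $P_2(A,B)=\mu(V(B,A))+\frac12\mu(T(A,B))$. The pair $(A,B)$ is an equilibrium if $P_1(A,B)\ge P_1(A',B)$ for all $A'\in Q_d$ and $P_2(A,B)\ge P_2(A,B')$ for all $B'\in Q_d$. For $i\in[d]$, $w_i^0=\mu(\{X\in Q_d: x_i=0\})$. $\mathbf 0=(0,\dots,0)$. *)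

theory Defs
  imports Complex_Main
begin

text \<open>The hypercube Q_d: bit-vectors of length d, represented as boolean lists
  (True = 1, False = 0). Coordinates are indexed by 0..d-1.\<close>

definition cube :: "nat \<Rightarrow> bool list set" where
  "cube d = {xs. length xs = d}"

definition hamming :: "bool list \<Rightarrow> bool list \<Rightarrow> nat" where
  "hamming X Y = card {i. i < length X \<and> X ! i \<noteq> Y ! i}"

definition zero_vec :: "nat \<Rightarrow> bool list" where
  "zero_vec d = replicate d False"

definition is_distribution :: "nat \<Rightarrow> (bool list \<Rightarrow> real) \<Rightarrow> bool" where
  "is_distribution d \<mu> \<longleftrightarrow> (\<forall>V\<in>cube d. \<mu> V \<ge> 0) \<and> (\<Sum>V\<in>cube d. \<mu> V) = 1"

definition measure_of :: "(bool list \<Rightarrow> real) \<Rightarrow> bool list set \<Rightarrow> real" where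
  "measure_of \<mu> S = (\<Sum>V\<in>S. \<mu> V)"

definition Vor :: "nat \<Rightarrow> bool list \<Rightarrow> bool list \<Rightarrow> bool list set" where
  "Vor d A B = {X\<in>cube d. hamming X A < hamming X B}"

definition Tie :: "nat \<Rightarrow> bool list \<Rightarrow> bool list \<Rightarrow> bool list set" where
  "Tie d A B = {X\<in>cube d. hamming X A = hamming X B}"

definition P1 :: "nat \<Rightarrow> (bool list \<Rightarrow> real) \<Rightarrow> bool list \<Rightarrow> bool list \<Rightarrow> real" where
  "P1 d \<mu> A B = measure_of \<mu> (Vor d A B) + measure_of \<mu> (Tie d A B) / 2"

definition P2 :: "nat \<Rightarrow> (bool list \<Rightarrow> real) \<Rightarrow> bool list \<Rightarrow> bool list \<Rightarrow> real" where
  "P2 d \<mu> A B = measure_of \<mu> (Vor d B A) + measure_of \<mu> (Tie d A B) / 2"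

definition is_equilibrium :: "nat \<Rightarrow> (bool list \<Rightarrow> real) \<Rightarrow> bool list \<Rightarrow> bool list \<Rightarrow> bool" where
  "is_equilibrium d \<mu> A B \<longleftrightarrow>
     (\<forall>A'\<in>cube d. P1 d \<mu> A B \<ge> P1 d \<mu> A' B) \<and>
     (\<forall>B'\<in>cube d. P2 d \<mu> A B \<ge> P2 d \<mu> A B')"

definition w0 :: "nat \<Rightarrow> (bool list \<Rightarrow> real) \<Rightarrow> nat \<Rightarrow> real" where
  "w0 d \<mu> i = measure_of \<mu> {X\<in>cube d. X ! i = False}"

end

theory Submission
  imports Defs
begin

text \<open>Since the game is constant-sum with both players receiving 1/2 at any position (B, B),
  (A, B) is an equilibrium iff neither A nor B can be beaten, i.e. P1(X, A) \<le> 1/2 and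
  P1(X, B) \<le> 1/2 for all X. If B has a 1 in coordinate i, then clearing that bit gives a position
  strictly closer than B to every X with x_i = 0 and strictly farther from every other X, so it
  wins exactly w_i^0 > 1/2 against B. Hence only the zero vector is unbeatable.\<close>

lemma finite_cube: "finite (cube d)"
proof -
  have "cube d = {xs. set xs \<subseteq> UNIV \<and> length xs = d}"
    by (auto simp: cube_def)
  then show ?thesis
    using finite_lists_length_eq[of "UNIV :: bool set" d] by simp
qed

lemma zero_vec_in_cube: "zero_vec d \<in> cube d"
  by (simp add: zero_vec_def cube_def)

lemma Tie_commute: "Tie d A B = Tie d B A"
  by (auto simp: Tie_def)

lemma P2_eq_P1_swap: "P2 d \<mu> A B = P1 d \<mu> B A"
  by (simp add: P1_def P2_def Tie_commute)

lemma P1_add_P1_swap: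
  assumes "is_distribution d \<mu>"
  shows "P1 d \<mu> A B + P1 d \<mu> B A = 1"
proof -
  have fin: "finite (Vor d A B)" "finite (Vor d B A)" "finite (Tie d A B)"
    using finite_cube by (auto simp: Vor_def Tie_def)
  have "cube d = (Vor d A B \<union> Vor d B A) \<union> Tie d A B"
    by (auto simp: Vor_def Tie_def)
  also have "(\<Sum>V\<in>\<dots>. \<mu> V) = (\<Sum>V\<in>Vor d A B \<union> Vor d B A. \<mu> V) + (\<Sum>V\<in>Tie d A B. \<mu> V)"
    using fin by (intro sum.union_disjoint) (auto simp: Vor_def Tie_def)
  also have "(\<Sum>V\<in>Vor d A B \<union> Vor d B A. \<mu> V) = (\<Sum>V\<in>Vor d A B. \<mu> V) + (\<Sum>V\<in>Vor d B A. \<mu> V)"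
    using fin by (intro sum.union_disjoint) (auto simp: Vor_def)
  finally have "(\<Sum>V\<in>cube d. \<mu> V)
      = (\<Sum>V\<in>Vor d A B. \<mu> V) + (\<Sum>V\<in>Vor d B A. \<mu> V) + (\<Sum>V\<in>Tie d A B. \<mu> V)" .
  then show ?thesis
    using assms by (simp add: P1_def Tie_commute[of d B A] is_distribution_def measure_of_def)
qed

lemma P1_self:
  assumes "is_distribution d \<mu>"
  shows "P1 d \<mu> B B = 1/2"
  using P1_add_P1_swap[OF assms, of B B] by simp

lemma is_equilibrium_iff_unbeatable:
  assumes "is_distribution d \<mu>" "A \<in> cube d" "B \<in> cube d"
  shows "is_equilibrium d \<mu> A B \<longleftrightarrow>
           (\<forall>X\<in>cube d. P1 d \<mu> X A \<le> 1/2) \<and> (\<forall>X\<in>cube d. P1 d \<mu> X B \<le> 1/2)"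
proof
  assume eq: "is_equilibrium d \<mu> A B"
  then have "P1 d \<mu> A B \<ge> P1 d \<mu> B B" "P1 d \<mu> B A \<ge> P1 d \<mu> A A"
    using assms by (auto simp: is_equilibrium_def P2_eq_P1_swap)
  then have "P1 d \<mu> A B \<ge> 1/2" "P1 d \<mu> B A \<ge> 1/2"
    using P1_self[OF assms(1)] by simp_all
  then have "P1 d \<mu> A B = 1/2" "P1 d \<mu> B A = 1/2"
    using P1_add_P1_swap[OF assms(1), of A B] by linarith+
  then show "(\<forall>X\<in>cube d. P1 d \<mu> X A \<le> 1/2) \<and> (\<forall>X\<in>cube d. P1 d \<mu> X B \<le> 1/2)"
    using eq by (auto simp: is_equilibrium_def P2_eq_P1_swap)
next
  assume unbeaten: "(\<forall>X\<in>cube d. P1 d \<mu> X A \<le> 1/2) \<and> (\<forall>X\<in>cube d. P1 d \<mu> X B \<le> 1/2)"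
  then have "P1 d \<mu> A B \<le> 1/2" "P1 d \<mu> B A \<le> 1/2"
    using assms(2,3) by simp_all
  then have "P1 d \<mu> A B = 1/2" "P1 d \<mu> B A = 1/2"
    using P1_add_P1_swap[OF assms(1), of A B] by linarith+
  then show "is_equilibrium d \<mu> A B"
    using unbeaten unfolding is_equilibrium_def P2_eq_P1_swap by auto
qed

lemma hamming_clear_bit:
  assumes "length X = length B" "i < length B" "B ! i"
  shows "\<not> X ! i \<Longrightarrow> hamming X B = Suc (hamming X (B[i := False]))"
    and "X ! i \<Longrightarrow> hamming X (B[i := False]) = Suc (hamming X B)"
proof -
  let ?D = "\<lambda>Y. {j. j < length X \<and> X ! j \<noteq> Y ! j}"
  have "?D B = insert i (?D (B[i := False]))" "i \<notin> ?D (B[i := False])" if "\<not> X ! i"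
    using that assms by (auto simp: nth_list_update)
  then show "\<not> X ! i \<Longrightarrow> hamming X B = Suc (hamming X (B[i := False]))"
    by (simp add: hamming_def)
  have "?D (B[i := False]) = insert i (?D B)" "i \<notin> ?D B" if "X ! i"
    using that assms by (auto simp: nth_list_update)
  then show "X ! i \<Longrightarrow> hamming X (B[i := False]) = Suc (hamming X B)"
    by (simp add: hamming_def)
qed

lemma P1_clear_bit:
  assumes "length B = d" "i < d" "B ! i"
  shows "P1 d \<mu> (B[i := False]) B = w0 d \<mu> i"
proof -
  have "Vor d (B[i := False]) B = {X\<in>cube d. X ! i = False}"
    using hamming_clear_bit[of _ B i] assms
    by (fastforce simp: Vor_def cube_def)
  moreover have "Tie d (B[i := False]) B = {}"
    using hamming_clear_bit[of _ B i] assms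
    by (fastforce simp: Tie_def cube_def)
  ultimately show ?thesis
    by (simp add: P1_def w0_def measure_of_def)
qed

lemma unbeatable_imp_zero_vec:
  assumes "\<forall>i<d. w0 d \<mu> i > 1/2" "B \<in> cube d"
    and unbeaten: "\<forall>X\<in>cube d. P1 d \<mu> X B \<le> 1/2"
  shows "B = zero_vec d"
proof (rule ccontr)
  assume "B \<noteq> zero_vec d"
  then obtain i where i: "i < d" "B ! i"
    using \<open>B \<in> cube d\<close> by (auto simp: cube_def zero_vec_def intro!: nth_equalityI)
  have "length B = d"
    using \<open>B \<in> cube d\<close> by (simp add: cube_def)
  then have "P1 d \<mu> (B[i := False]) B \<le> 1/2"
    using unbeaten by (simp add: cube_def)
  then show False
    using P1_clear_bit[OF \<open>length B = d\<close> i] assms(1) i by force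
qed

theorem mainTheorem1:
  fixes d :: nat and \<mu> :: "bool list \<Rightarrow> real"
  assumes "d \<ge> 1"
    and "is_distribution d \<mu>"
    and "\<forall>i<d. w0 d \<mu> i > 1/2"
  shows "(\<forall>A\<in>cube d. \<forall>B\<in>cube d. is_equilibrium d \<mu> A B \<longrightarrow>
            A = zero_vec d \<and> B = zero_vec d)
       \<and> ((\<exists>A\<in>cube d. \<exists>B\<in>cube d. is_equilibrium d \<mu> A B)
            \<longleftrightarrow> is_equilibrium d \<mu> (zero_vec d) (zero_vec d))
       \<and> (is_equilibrium d \<mu> (zero_vec d) (zero_vec d)
            \<longleftrightarrow> (\<forall>X\<in>cube d. P1 d \<mu> X (zero_vec d) \<le> 1/2))"
proof -
  have only_zero: "\<forall>A\<in>cube d. \<forall>B\<in>cube d. is_equilibrium d \<mu> A B \<longrightarrow>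
                     A = zero_vec d \<and> B = zero_vec d"
    using is_equilibrium_iff_unbeatable[OF assms(2)] unbeatable_imp_zero_vec[OF assms(3)]
    by blast
  then show ?thesis
    using is_equilibrium_iff_unbeatable[OF assms(2) zero_vec_in_cube zero_vec_in_cube]
      zero_vec_in_cube by blast
qed

end
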